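(* Fix a block $i\in\{1,\dots,N\}$, a battery state $\epsilon$ and an H-channel state $\gamma_H$. If $\gamma_G^-\le\gamma_G^+$ are G-channel states and the action $\alpha=1$ is optimal in block $i$ at state $\langle\epsilon,\gamma_G^+,\gamma_H\rangle$, then $\alpha=1$ is optimal in block $i$ at state $\langle\epsilon,\gamma_G^-,\gamma_H\rangle$. Equivalently, the optimal policy is monotone in $\gamma_G$: there is a threshold $\Gamma_{G,i}(\epsilon,\gamma_H)$ such that the EH-BS is assigned ($\alpha=1$) only when $\gamma_G\le\Gamma_{G,i}(\epsilon,\gamma_H)$.
   Context: Finite-horizon MDP with $N$ blocks of length $\tau>0$. Parameters: $B_m>0$, positive integers $M,K$; channel levels $0<H_1<\dots<H_K$; $R,W,\sigma^2,g_0,\theta,d_G,d_H>0$; $p_G^{\max},p_H^{\max}>0$; weights $w_G,w_D>0$; $E_{H}$ a random variable with density $f_{E_H}$ on $[0,E_m]$. A state is $s=\langle\epsilon,\gamma_G,\gamma_H\rangle$ with $\epsilon\in\{(2m-1)B_m/(2M): m=1,\dots,M\}$ and $\gamma_G,\gamma_H\in\{H_1,\dots,H_K\}$. Let $p^{inv}_j(s)=(2^{R/(W\tau)}-1)\sigma^2(g_0 d_j^{-\theta}\gamma_j)^{-1}$ for $j\in\{G,H\}$, $\kappa=\min\{p_G^{\max},w_D(w_G\tau)^{-1}\}$, and $c(s)=w_D$ if $p^{inv}_G(s)>\kappa$, $c(s)=w_G p^{inv}_G(s)\tau$ otherwise. The allowable actions are $\mathcal{A}_s=\{0\}$ if $p^{inv}_H(s)>\min\{\epsilon/\tau,p_H^{\max}\}$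 and $\mathcal{A}_s=\{0,1\}$ otherwise; the cost is $c(s,\alpha)=(1-\alpha)c(s)$. Transitions: given $s$ and $\alpha$, the next channel states $\gamma_G',\gamma_H'$ are independent, each uniform on $\{H_1,\dots,H_K\}$, independent of the next energy state $\epsilon'=Q(\epsilon-\alpha p^{inv}_H(s)\tau+E_H)$, where $Q(\varepsilon)=\big(2\min\{\lfloor M\min\{\varepsilon,B_m\}/B_m\rfloor+1,M\}-1\big)B_m/(2M)$; denote the resulting transition probability $p(s'|s,\alpha)$. Optimal cost-to-go functions: $u_N^*(s)=\min_{\alpha\in\mathcal{A}_s}c(s,\alpha)$ and, for $i<N$, $u_i^*(s)=\min_{\alpha\in\mathcal{A}_s}\{c(s,\alpha)+\sum_{s'}p(s'|s,\alpha)u_{i+1}^*(s')\}$. Action $\alpha$ is optimal in block $i$ at state $s$ if $\alpha\in\mathcal{A}_s$ and it attains the minimum in the defining equation of $u_i^*(s)$. *)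

theory Defs
  imports "HOL-Analysis.Analysis"
begin

record mdp_params =
  tau :: real
  Bm :: real
  Mlev :: nat
  Klev :: nat
  Hch :: "nat \<Rightarrow> real"
  Rrate :: real
  Wbw :: real
  sigma2 :: real
  g0 :: real
  theta :: real
  dG :: real
  dH :: real
  pGmax :: real
  pHmax :: real
  wG :: real
  wD :: real
  Em :: real
  fE :: "real \<Rightarrow> real"
  Nblk :: nat

text \<open>A state is a triple (epsilon, gamma_G, gamma_H).\<close>
type_synonym state = "real \<times> real \<times> real"

definition energy_levels :: "mdp_params \<Rightarrow> real set" where
  "energy_levels P = (\<lambda>m. (2 * real m - 1) * Bm P / (2 * real (Mlev P))) ` {1..Mlev P}"

definition channel_levels :: "mdp_params \<Rightarrow> real set" where
  "channel_levels P = Hch P ` {1..Klev P}"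

definition state_set :: "mdp_params \<Rightarrow> state set" where
  "state_set P = energy_levels P \<times> channel_levels P \<times> channel_levels P"

definition pinv :: "mdp_params \<Rightarrow> real \<Rightarrow> real \<Rightarrow> real" where
  "pinv P d \<gamma> = (2 powr (Rrate P / (Wbw P * tau P)) - 1) * sigma2 P
                  / (g0 P * d powr (- theta P) * \<gamma>)"

definition pinvG :: "mdp_params \<Rightarrow> state \<Rightarrow> real" where
  "pinvG P s = (case s of (\<epsilon>, \<gamma>G, \<gamma>H) \<Rightarrow> pinv P (dG P) \<gamma>G)"

definition pinvH :: "mdp_params \<Rightarrow> state \<Rightarrow> real" where
  "pinvH P s = (case s of (\<epsilon>, \<gamma>G, \<gamma>H) \<Rightarrow> pinv P (dH P) \<gamma>H)"

definition kappa :: "mdp_params \<Rightarrow> real" where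
  "kappa P = min (pGmax P) (wD P / (wG P * tau P))"

definition cost0 :: "mdp_params \<Rightarrow> state \<Rightarrow> real" where
  "cost0 P s = (if pinvG P s > kappa P then wD P else wG P * pinvG P s * tau P)"

definition allowed :: "mdp_params \<Rightarrow> state \<Rightarrow> nat set" where
  "allowed P s = (case s of (\<epsilon>, \<gamma>G, \<gamma>H) \<Rightarrow>
     (if pinvH P s > min (\<epsilon> / tau P) (pHmax P) then {0} else {0, 1}))"

definition cost :: "mdp_params \<Rightarrow> state \<Rightarrow> nat \<Rightarrow> real" where
  "cost P s \<alpha> = (1 - real \<alpha>) * cost0 P s"

definition Qquant :: "mdp_params \<Rightarrow> real \<Rightarrow> real" where
  "Qquant P x = (2 * real_of_int (min (\<lfloor>real (Mlev P) * min x (Bm P) / Bm P\<rfloor> + 1) (int (Mlev P))) - 1)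
                 * Bm P / (2 * real (Mlev P))"

definition EH_dist :: "mdp_params \<Rightarrow> real measure" where
  "EH_dist P = density lborel (\<lambda>e. ennreal (fE P e))"

definition ptransE :: "mdp_params \<Rightarrow> state \<Rightarrow> nat \<Rightarrow> real \<Rightarrow> real" where
  "ptransE P s \<alpha> \<epsilon>' = (case s of (\<epsilon>, \<gamma>G, \<gamma>H) \<Rightarrow>
     measure (EH_dist P) {e. Qquant P (\<epsilon> - real \<alpha> * pinvH P s * tau P + e) = \<epsilon>'})"

definition ptrans :: "mdp_params \<Rightarrow> state \<Rightarrow> nat \<Rightarrow> state \<Rightarrow> real" where
  "ptrans P s \<alpha> s' = (case s' of (\<epsilon>', \<gamma>G', \<gamma>H') \<Rightarrow>
     (if \<gamma>G' \<in> channel_levels P \<and> \<gamma>H' \<in> channel_levels P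
      then (1 / real (Klev P)) * (1 / real (Klev P)) * ptransE P s \<alpha> \<epsilon>' else 0))"

text \<open>utg P k s = optimal cost-to-go with k blocks remaining after the current one.\<close>
fun utg :: "mdp_params \<Rightarrow> nat \<Rightarrow> state \<Rightarrow> real" where
  "utg P 0 s = Min ((\<lambda>\<alpha>. cost P s \<alpha>) ` allowed P s)"
| "utg P (Suc k) s = Min ((\<lambda>\<alpha>. cost P s \<alpha> +
      (\<Sum>s'\<in>state_set P. ptrans P s \<alpha> s' * utg P k s')) ` allowed P s)"

text \<open>u_i^*(s), for blocks i = 1..N.\<close>
definition ustar :: "mdp_params \<Rightarrow> nat \<Rightarrow> state \<Rightarrow> real" where
  "ustar P i s = utg P (Nblk P - i) s"

definition qval :: "mdp_params \<Rightarrow> nat \<Rightarrow> state \<Rightarrow> nat \<Rightarrow> real" where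
  "qval P i s \<alpha> = (if i < Nblk P
     then cost P s \<alpha> + (\<Sum>s'\<in>state_set P. ptrans P s \<alpha> s' * ustar P (Suc i) s')
     else cost P s \<alpha>)"

definition optimal_action :: "mdp_params \<Rightarrow> nat \<Rightarrow> state \<Rightarrow> nat \<Rightarrow> bool" where
  "optimal_action P i s \<alpha> \<longleftrightarrow> \<alpha> \<in> allowed P s \<and> qval P i s \<alpha> = ustar P i s"

definition valid_params :: "mdp_params \<Rightarrow> bool" where
  "valid_params P \<longleftrightarrow>
     tau P > 0 \<and> Bm P > 0 \<and> Mlev P \<ge> 1 \<and> Klev P \<ge> 1 \<and> Nblk P \<ge> 1 \<and>
     0 < Hch P 1 \<and> (\<forall>k\<in>{1..Klev P}. \<forall>l\<in>{1..Klev P}. k < l \<longrightarrow> Hch P k < Hch P l) \<and>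
     Rrate P > 0 \<and> Wbw P > 0 \<and> sigma2 P > 0 \<and> g0 P > 0 \<and> theta P > 0 \<and>
     dG P > 0 \<and> dH P > 0 \<and> pGmax P > 0 \<and> pHmax P > 0 \<and> wG P > 0 \<and> wD P > 0 \<and>
     Em P > 0 \<and> fE P \<in> borel_measurable borel \<and> (\<forall>x. fE P x \<ge> 0) \<and>
     (\<forall>x. x \<notin> {0..Em P} \<longrightarrow> fE P x = 0) \<and>
     (\<integral>\<^sup>+ x. ennreal (fE P x) \<partial>lborel) = 1"

end

theory Submission
  imports Defs
begin

text \<open>Neither the allowable actions nor the transition law depend on \<open>\<gamma>\<^sub>G\<close>, so for each action
  the Q-value is the immediate cost plus a continuation term independent of \<open>\<gamma>\<^sub>G\<close>. Assigning the
  EH-BS (\<open>\<alpha> = 1\<close>) has zero immediate cost, while for \<open>\<alpha> = 0\<close> it is \<open>c(s)\<close>, a nondecreasing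
  function of \<open>p\<^sup>i\<^sup>n\<^sup>v\<^sub>G(s)\<close> and hence nonincreasing in \<open>\<gamma>\<^sub>G\<close>. Lowering \<open>\<gamma>\<^sub>G\<close> thus leaves the
  Q-value of \<open>\<alpha> = 1\<close> unchanged and can only raise that of \<open>\<alpha> = 0\<close>.\<close>

lemma channel_level_pos:
  assumes "valid_params P" "\<gamma> \<in> channel_levels P"
  shows "0 < \<gamma>"
proof -
  obtain k where k: "k \<in> {1..Klev P}" "\<gamma> = Hch P k"
    using assms(2) unfolding channel_levels_def by auto
  have "0 < Hch P 1" and "Hch P 1 \<le> Hch P k"
    using assms(1) k(1) unfolding valid_params_def by (auto simp: order_le_less)
  then show ?thesis using k(2) by linarith
qed

lemma pinv_antimono:
  assumes "valid_params P" "0 < \<gamma>1" "\<gamma>1 \<le> \<gamma>2"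
  shows "pinv P d \<gamma>2 \<le> pinv P d \<gamma>1"
proof -
  have v: "tau P > 0" "Rrate P > 0" "Wbw P > 0" "sigma2 P > 0" "g0 P > 0"
    using assms(1) unfolding valid_params_def by auto
  then have "2 powr (Rrate P / (Wbw P * tau P)) > 1" by simp
  then have "0 \<le> (2 powr (Rrate P / (Wbw P * tau P)) - 1) * sigma2 P"
    using v(4) by (simp add: less_imp_le)
  moreover have "0 \<le> g0 P * d powr (- theta P)" using v by simp
  ultimately show ?thesis
    unfolding pinv_def using assms(2,3) v(5)
    by (cases "d = 0") (auto intro!: divide_left_mono mult_left_mono mult_pos_pos)
qed

lemma cost0_mono_pinvG:
  assumes "valid_params P" "pinvG P s \<le> pinvG P s'"
  shows "cost0 P s \<le> cost0 P s'"
proof -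
  have v: "wG P > 0" "tau P > 0" using assms(1) unfolding valid_params_def by auto
  have "wG P * p * tau P \<le> wD P" if "p \<le> kappa P" for p
  proof -
    have "p \<le> wD P / (wG P * tau P)" using that unfolding kappa_def by linarith
    then show ?thesis using v by (simp add: pos_le_divide_eq algebra_simps)
  qed
  moreover have "wG P * pinvG P s * tau P \<le> wG P * pinvG P s' * tau P"
    using assms(2) v by simp
  ultimately show ?thesis unfolding cost0_def using assms(2) by auto
qed

lemma cost0_antimono_channelG:
  assumes "valid_params P" "0 < \<gamma>1" "\<gamma>1 \<le> \<gamma>2"
  shows "cost0 P (e, \<gamma>2, h) \<le> cost0 P (e, \<gamma>1, h)"
  using assms by (intro cost0_mono_pinvG) (simp_all add: pinvG_def pinv_antimono)

lemma allowed_channelG_indep: "allowed P (e, \<gamma>1, h) = allowed P (e, \<gamma>2, h)"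
  by (simp add: allowed_def pinvH_def)

lemma ptrans_channelG_indep: "ptrans P (e, \<gamma>1, h) \<alpha> s' = ptrans P (e, \<gamma>2, h) \<alpha> s'"
  by (simp add: ptrans_def ptransE_def pinvH_def split: prod.split)

lemma qval_minus_cost_channelG_indep:
  "qval P i (e, \<gamma>1, h) \<alpha> - cost P (e, \<gamma>1, h) \<alpha> = qval P i (e, \<gamma>2, h) \<alpha> - cost P (e, \<gamma>2, h) \<alpha>"
  by (simp add: qval_def ptrans_channelG_indep[of P e \<gamma>1 h _ _ \<gamma>2])

lemma qval_one_channelG_indep: "qval P i (e, \<gamma>1, h) 1 = qval P i (e, \<gamma>2, h) 1"
  using qval_minus_cost_channelG_indep[of P i e \<gamma>1 h 1 \<gamma>2] by (simp add: cost_def)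

lemma qval_zero_antimono_channelG:
  assumes "valid_params P" "0 < \<gamma>1" "\<gamma>1 \<le> \<gamma>2"
  shows "qval P i (e, \<gamma>2, h) 0 \<le> qval P i (e, \<gamma>1, h) 0"
  using qval_minus_cost_channelG_indep[of P i e \<gamma>1 h 0 \<gamma>2]
    cost0_antimono_channelG[OF assms, of e h]
  by (simp add: cost_def)

lemma ustar_eq_Min_qval:
  assumes "i \<le> Nblk P"
  shows "ustar P i s = Min (qval P i s ` allowed P s)"
proof (cases "i < Nblk P")
  case True
  then have "Nblk P - i = Suc (Nblk P - Suc i)" by simp
  then show ?thesis using True unfolding ustar_def qval_def by simp
next
  case False
  then have "Nblk P - i = 0" using assms by simp
  then show ?thesis using False unfolding ustar_def qval_def by simp
qed

lemma optimal_action_one_iff: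
  assumes "i \<le> Nblk P"
  shows "optimal_action P i s 1 \<longleftrightarrow> 1 \<in> allowed P s \<and> qval P i s 1 \<le> qval P i s 0"
proof (cases "1 \<in> allowed P s")
  case True
  then have "allowed P s = {0, 1}" unfolding allowed_def by (auto split: prod.splits if_splits)
  then show ?thesis
    unfolding optimal_action_def ustar_eq_Min_qval[OF assms] by (auto simp: min_def)
qed (simp add: optimal_action_def)

theorem proposition2:
  fixes P :: mdp_params and i :: nat and \<epsilon> \<gamma>H \<gamma>Gm \<gamma>Gp :: real
  assumes "valid_params P"
    and "i \<in> {1..Nblk P}"
    and "\<epsilon> \<in> energy_levels P"
    and "\<gamma>H \<in> channel_levels P"
    and "\<gamma>Gm \<in> channel_levels P" and "\<gamma>Gp \<in> channel_levels P"
    and "\<gamma>Gm \<le> \<gamma>Gp"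
    and "optimal_action P i (\<epsilon>, \<gamma>Gp, \<gamma>H) 1"
  shows "optimal_action P i (\<epsilon>, \<gamma>Gm, \<gamma>H) 1"
proof -
  have iN: "i \<le> Nblk P" using assms(2) by simp
  have allowed: "1 \<in> allowed P (\<epsilon>, \<gamma>Gm, \<gamma>H)"
    and opt: "qval P i (\<epsilon>, \<gamma>Gp, \<gamma>H) 1 \<le> qval P i (\<epsilon>, \<gamma>Gp, \<gamma>H) 0"
    using assms(8) allowed_channelG_indep[of P \<epsilon> \<gamma>Gm \<gamma>H \<gamma>Gp]
    unfolding optimal_action_one_iff[OF iN] by simp_all
  have "qval P i (\<epsilon>, \<gamma>Gm, \<gamma>H) 1 = qval P i (\<epsilon>, \<gamma>Gp, \<gamma>H) 1"
    by (rule qval_one_channelG_indep)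
  also have "\<dots> \<le> qval P i (\<epsilon>, \<gamma>Gp, \<gamma>H) 0" by (rule opt)
  also have "\<dots> \<le> qval P i (\<epsilon>, \<gamma>Gm, \<gamma>H) 0"
    using qval_zero_antimono_channelG[OF assms(1) channel_level_pos[OF assms(1,5)] assms(7)] .
  finally show ?thesis using allowed unfolding optimal_action_one_iff[OF iN] by simp
qed

end
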